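(* Let $p\in[0,1)$ and let $z_l\in\mathbb R^N$ satisfy $\lim_{l\to\infty}z_l=z\in\mathbb R^N$. If $[z]$ has nonempty interior, then (with $\xi_p(z_l)$ defined for all sufficiently large $l$) $$\lim_{l\to\infty}\xi_p(z_l)=\xi_p(z)\quad\text{and}\quad \lim_{l\to\infty}\Phi_p(z_l,\xi_p(z_l))=\Phi_p(z,\xi_p(z)).$$
   Context: Fix unit vectors $v_1,\dots,v_N\in S^{n-1}$ not contained in any closed hemisphere and weights $\alpha_1,\dots,\alpha_N>0$ (i.e. the measure $\mu=\sum_j\alpha_j\delta_{v_j}$). For $z\in\mathbb R^N$ let $[z]=\{x\in\mathbb R^n: x\cdot v_j\le z_j,\ j=1,\dots,N\}$. For $z$ with $[z]$ having nonempty interior and $\xi\in[z]$, set $\Phi_p(z,\xi)=\sum_{j=1}^N(z_j-\xi\cdot v_j)^p\alpha_j$ if $p\in(0,1)$ and $\Phi_0(z,\xi)=\sum_{j=1}^N\alpha_j\log(z_j-\xi\cdot v_j)$ (with $\log 0=-\infty$). It is known that $\sup_{\xi\in[z]}\Phi_p(z,\xi)$ is attained at a unique point, which lies in the interior of $[z]$; this point is denoted $\xi_p(z)$. *)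

theory Defs
  imports "HOL-Analysis.Analysis"
begin

text \<open>Vectors v_0,...,v_(N-1) (indices j < N) in a Euclidean space; z :: nat => real,
  only the coordinates j < N matter.\<close>

definition poly_set :: "nat \<Rightarrow> (nat \<Rightarrow> 'a::euclidean_space) \<Rightarrow> (nat \<Rightarrow> real) \<Rightarrow> 'a set" where
  "poly_set N v z = {x. \<forall>j<N. x \<bullet> v j \<le> z j}"

text \<open>Phi_p(z,xi) as an extended real; for p = 0 the logarithmic functional with log 0 = -infinity.\<close>

definition Phi :: "real \<Rightarrow> nat \<Rightarrow> (nat \<Rightarrow> 'a::euclidean_space) \<Rightarrow> (nat \<Rightarrow> real)
    \<Rightarrow> (nat \<Rightarrow> real) \<Rightarrow> 'a \<Rightarrow> ereal" where
  "Phi p N v \<alpha> z \<xi> =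
     (if p = 0 then
        (if (\<forall>j<N. 0 < z j - \<xi> \<bullet> v j)
         then ereal (\<Sum>j<N. \<alpha> j * ln (z j - \<xi> \<bullet> v j)) else -\<infinity>)
      else ereal (\<Sum>j<N. (z j - \<xi> \<bullet> v j) powr p * \<alpha> j))"

definition xi :: "real \<Rightarrow> nat \<Rightarrow> (nat \<Rightarrow> 'a::euclidean_space) \<Rightarrow> (nat \<Rightarrow> real)
    \<Rightarrow> (nat \<Rightarrow> real) \<Rightarrow> 'a" where
  "xi p N v \<alpha> z = (THE \<xi>. \<xi> \<in> poly_set N v z \<and>
      (\<forall>\<eta>\<in>poly_set N v z. Phi p N v \<alpha> z \<eta> \<le> Phi p N v \<alpha> z \<xi>))"

end

(* Phi_p(z, xi) depends on xi only through the slacks z_j - xi . v_j, and as an extended real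
   (log 0 = -infinity) it is jointly continuous in (z, xi) on feasible pairs. Since log and t^p
   (0 < p < 1) are strictly concave, and since distinct points have distinct slack vectors (the v_j
   lie in no closed hemisphere), the maximiser over [z] is unique once [z] has interior. The hemisphere
   condition also makes the polytopes [z_l] uniformly bounded, and every point of [z] is a limit of
   points of [z_l]. Hence every subsequential limit of xi_p(z_l) maximises Phi_p(z, .) over [z] and
   therefore equals xi_p(z); boundedness gives convergence of the whole sequence, and joint continuity
   the convergence of the values. *)

theory Submission
  imports Defs
begin

lemma midpoint_less_if_deriv_decreasing:
  fixes f f' :: "real \<Rightarrow> real"
  assumes "a < b" and cont: "continuous_on {a..b} f"
    and deriv: "\<And>x. a < x \<Longrightarrow> x < b \<Longrightarrow> (f has_real_derivative f' x) (at x)"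
    and decr: "\<And>x y. a < x \<Longrightarrow> x < y \<Longrightarrow> y < b \<Longrightarrow> f' y < f' x"
  shows "(f a + f b) / 2 < f ((a + b) / 2)"
proof -
  define m where "m = (a + b) / 2"
  have am: "a < m" "m < b" using \<open>a < b\<close> by (auto simp: m_def)
  have deriv': "(f has_derivative (*) (f' x)) (at x)" if "a < x" "x < b" for x
    using deriv[OF that] by (simp add: has_field_derivative_def)
  obtain s where s: "a < s" "s < m" "f m - f a = f' s * (m - a)"
    by (rule mvt[OF am(1) continuous_on_subset[OF cont] deriv']) (use am in auto)
  obtain t where t: "m < t" "t < b" "f b - f m = f' t * (b - m)"
    by (rule mvt[OF am(2) continuous_on_subset[OF cont] deriv']) (use am in auto)
  have "m - a = b - m" "0 < b - m" using am by (auto simp: m_def field_simps)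
  moreover have "f' t * (b - m) < f' s * (b - m)"
    using decr[of s t] s t am by (intro mult_strict_right_mono) auto
  ultimately show ?thesis using s(3) t(3) by (simp add: m_def field_simps)
qed

definition powlog :: "real \<Rightarrow> real \<Rightarrow> real" where
  "powlog p x = (if p = 0 then ln x else x powr p)"

lemma powlog_midpoint_less:
  assumes p: "0 \<le> p" "p < 1" and "a \<noteq> b" "0 \<le> a" "0 \<le> b" and pos: "p = 0 \<Longrightarrow> 0 < a \<and> 0 < b"
  shows "(powlog p a + powlog p b) / 2 < powlog p ((a + b) / 2)"
proof -
  have less: "(powlog p a + powlog p b) / 2 < powlog p ((a + b) / 2)"
    if "a < b" "0 \<le> a" "p = 0 \<Longrightarrow> 0 < a" for a b
  proof (cases "p = 0")
    case True
    then show ?thesis using that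
      by (intro midpoint_less_if_deriv_decreasing[where f' = inverse])
        (auto simp: powlog_def intro!: continuous_on_ln continuous_on_id DERIV_ln)
  next
    case False
    then have "0 < p" using p by simp
    then show ?thesis using that p
      by (intro midpoint_less_if_deriv_decreasing[where f' = "\<lambda>x. p * x powr (p - 1)"])
        (auto simp: powlog_def intro!: continuous_on_powr' continuous_on_id continuous_on_const
          has_real_derivative_powr powr_less_mono2_neg)
  qed
  show ?thesis
    using less[of a b] less[of b a] assms by (cases "a < b") (auto simp: add.commute)
qed

definition Phi_slack :: "real \<Rightarrow> nat \<Rightarrow> (nat \<Rightarrow> real) \<Rightarrow> (nat \<Rightarrow> real) \<Rightarrow> ereal" where
  "Phi_slack p N \<alpha> t =
     (if p = 0 \<and> \<not> (\<forall>j<N. 0 < t j) then -\<infinity> else ereal (\<Sum>j<N. \<alpha> j * powlog p (t j)))"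

lemma Phi_eq_Phi_slack: "Phi p N v \<alpha> z \<xi> = Phi_slack p N \<alpha> (\<lambda>j. z j - \<xi> \<bullet> v j)"
  by (simp add: Phi_def Phi_slack_def powlog_def mult.commute)

lemma Phi_slack_0:
  "Phi_slack 0 N \<alpha> t = (if \<forall>j<N. 0 < t j then ereal (\<Sum>j<N. \<alpha> j * ln (t j)) else -\<infinity>)"
  by (simp add: Phi_slack_def powlog_def)

lemma Phi_slack_midpoint_greater:
  assumes \<alpha>: "\<forall>j<N. 0 < \<alpha> j" and p: "0 \<le> p" "p < 1"
    and nonneg: "\<forall>j<N. 0 \<le> s j \<and> 0 \<le> t j" and j0: "j0 < N" "s j0 \<noteq> t j0"
    and fin: "Phi_slack p N \<alpha> s \<noteq> -\<infinity>" "Phi_slack p N \<alpha> t \<noteq> -\<infinity>"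
  shows "min (Phi_slack p N \<alpha> s) (Phi_slack p N \<alpha> t) < Phi_slack p N \<alpha> (\<lambda>j. (s j + t j) / 2)"
proof -
  have pos: "0 < s j" "0 < t j" if "p = 0" "j < N" for j
    using fin that by (auto simp: Phi_slack_def split: if_splits)
  have less: "\<alpha> j * ((powlog p (s j) + powlog p (t j)) / 2) < \<alpha> j * powlog p ((s j + t j) / 2)"
    if "j < N" "s j \<noteq> t j" for j
    using powlog_midpoint_less[OF p that(2)] nonneg pos \<alpha> that by (intro mult_strict_left_mono) auto
  have "min (\<Sum>j<N. \<alpha> j * powlog p (s j)) (\<Sum>j<N. \<alpha> j * powlog p (t j))
      \<le> (\<Sum>j<N. \<alpha> j * ((powlog p (s j) + powlog p (t j)) / 2))"
    by (simp add: sum.distrib sum_divide_distrib[symmetric] distrib_left)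
  also have "\<dots> < (\<Sum>j<N. \<alpha> j * powlog p ((s j + t j) / 2))"
  proof (rule sum_strict_mono_ex1)
    show "\<forall>j\<in>{..<N}. \<alpha> j * ((powlog p (s j) + powlog p (t j)) / 2) \<le> \<alpha> j * powlog p ((s j + t j) / 2)"
    proof
      fix j assume "j \<in> {..<N}"
      then show "\<alpha> j * ((powlog p (s j) + powlog p (t j)) / 2) \<le> \<alpha> j * powlog p ((s j + t j) / 2)"
        using less[of j] by (cases "s j = t j") auto
    qed
  qed (use less j0 in auto)
  finally have "min (\<Sum>j<N. \<alpha> j * powlog p (s j)) (\<Sum>j<N. \<alpha> j * powlog p (t j))
      < (\<Sum>j<N. \<alpha> j * powlog p ((s j + t j) / 2))" .
  moreover have "Phi_slack p N \<alpha> s = ereal (\<Sum>j<N. \<alpha> j * powlog p (s j))"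
    "Phi_slack p N \<alpha> t = ereal (\<Sum>j<N. \<alpha> j * powlog p (t j))"
    "Phi_slack p N \<alpha> (\<lambda>j. (s j + t j) / 2) = ereal (\<Sum>j<N. \<alpha> j * powlog p ((s j + t j) / 2))"
    using fin pos by (auto simp: Phi_slack_def add_pos_pos)
  ultimately show ?thesis
    by (simp add: min_less_iff_disj)
qed

lemma sum_mult_ln_le:
  fixes \<alpha> t :: "nat \<Rightarrow> real"
  assumes "finite A" "j0 \<in> A" "\<forall>j\<in>A. 0 \<le> \<alpha> j \<and> 0 < t j"
  shows "(\<Sum>j\<in>A. \<alpha> j * ln (t j)) \<le> \<alpha> j0 * ln (t j0) + (\<Sum>j\<in>A. \<alpha> j * ln (max 1 (t j)))"
proof -
  have "(\<Sum>j\<in>A. \<alpha> j * ln (t j)) = \<alpha> j0 * ln (t j0) + (\<Sum>j\<in>A - {j0}. \<alpha> j * ln (t j))"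
    using assms by (simp add: sum.remove)
  also have "\<dots> \<le> \<alpha> j0 * ln (t j0) + (\<Sum>j\<in>A - {j0}. \<alpha> j * ln (max 1 (t j)))"
    using assms by (auto intro!: sum_mono mult_left_mono)
  also have "\<dots> \<le> \<alpha> j0 * ln (t j0) + (\<Sum>j\<in>A. \<alpha> j * ln (max 1 (t j)))"
    using assms by (simp add: sum.remove)
  finally show ?thesis .
qed

lemma tendsto_Phi_slack_MInfty:
  assumes \<alpha>: "\<forall>j<N. 0 < \<alpha> j" and lim: "\<forall>j<N. (\<lambda>l. t l j) \<longlonglongrightarrow> s j"
    and j0: "j0 < N" "s j0 \<le> 0"
  shows "(\<lambda>l. Phi_slack 0 N \<alpha> (t l)) \<longlonglongrightarrow> -\<infinity>"
  unfolding tendsto_MInfty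
proof
  \<comment> \<open>the log of the vanishing slack \<open>t l j0\<close> is unbounded below; the other terms stay below
    their values at \<open>max 1 (t l j)\<close>, which converge\<close>
  fix r
  define U where "U = (\<Sum>j<N. \<alpha> j * ln (max 1 (s j)))"
  have "(\<lambda>l. \<Sum>j<N. \<alpha> j * ln (max 1 (t l j))) \<longlonglongrightarrow> U"
    unfolding U_def using lim by (auto intro!: tendsto_intros)
  then have ev_U: "eventually (\<lambda>l. (\<Sum>j<N. \<alpha> j * ln (max 1 (t l j))) < U + 1) sequentially"
    by (rule order_tendstoD) simp
  define c where "c = exp ((r - U - 1) / \<alpha> j0)"
  have "s j0 < c"
    using j0 by (simp add: c_def le_less_trans[OF _ exp_gt_zero])
  then have ev_c: "eventually (\<lambda>l. t l j0 < c) sequentially"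
    by (rule order_tendstoD(2)[OF lim[rule_format, OF j0(1)]])
  show "eventually (\<lambda>l. Phi_slack 0 N \<alpha> (t l) < ereal r) sequentially"
    using ev_U ev_c
  proof eventually_elim
    case (elim l)
    show ?case
    proof (cases "\<forall>j<N. 0 < t l j")
      case True
      moreover have "0 < c" by (simp add: c_def)
      ultimately have "ln (t l j0) < ln c"
        using elim j0 by simp
      then have "ln (t l j0) < (r - U - 1) / \<alpha> j0"
        by (simp add: c_def)
      then have "\<alpha> j0 * ln (t l j0) < r - U - 1"
        using \<alpha> j0 by (simp add: field_simps)
      moreover have "(\<Sum>j<N. \<alpha> j * ln (t l j)) \<le> \<alpha> j0 * ln (t l j0) + (\<Sum>j<N. \<alpha> j * ln (max 1 (t l j)))"
        using \<alpha> True j0 by (intro sum_mult_ln_le) auto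
      ultimately show ?thesis
        using True elim by (simp add: Phi_slack_0)
    qed (auto simp: Phi_slack_0)
  qed
qed

lemma tendsto_Phi_slack:
  assumes \<alpha>: "\<forall>j<N. 0 < \<alpha> j" and "0 \<le> p"
    and lim: "\<forall>j<N. (\<lambda>l. t l j) \<longlonglongrightarrow> s j"
    and nonneg: "eventually (\<lambda>l. \<forall>j<N. 0 \<le> t l j) sequentially"
  shows "(\<lambda>l. Phi_slack p N \<alpha> (t l)) \<longlonglongrightarrow> Phi_slack p N \<alpha> s"
proof -
  consider "p \<noteq> 0" | "p = 0" "\<forall>j<N. 0 < s j" | j0 where "p = 0" "j0 < N" "s j0 \<le> 0"
    by force
  then show ?thesis
  proof cases
    case 1
    then have "0 < p" using \<open>0 \<le> p\<close> by simp
    have "(\<lambda>l. \<Sum>j<N. \<alpha> j * powlog p (t l j)) \<longlonglongrightarrow> (\<Sum>j<N. \<alpha> j * powlog p (s j))"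
      using 1 \<open>0 < p\<close> lim nonneg
      by (auto simp: powlog_def intro!: tendsto_intros tendsto_powr' elim!: eventually_mono)
    then show ?thesis using 1 by (simp add: Phi_slack_def)
  next
    case 2
    have "eventually (\<lambda>l. \<forall>j\<in>{..<N}. 0 < t l j) sequentially"
      using lim 2 by (intro eventually_ball_finite) (auto intro: order_tendstoD)
    then have "eventually (\<lambda>l. ereal (\<Sum>j<N. \<alpha> j * ln (t l j)) = Phi_slack p N \<alpha> (t l)) sequentially"
      by eventually_elim (simp add: Phi_slack_0 2)
    moreover have "(\<lambda>l. ereal (\<Sum>j<N. \<alpha> j * ln (t l j))) \<longlonglongrightarrow> Phi_slack p N \<alpha> s"
      using lim 2 by (auto simp: Phi_slack_0 intro!: tendsto_intros)
    ultimately show ?thesis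
      by (rule Lim_transform_eventually[rotated])
  next
    case 3
    then show ?thesis
      using tendsto_Phi_slack_MInfty[OF \<alpha> lim] by (auto simp: Phi_slack_def)
  qed
qed

lemma closed_poly_set: "closed (poly_set N v z)"
proof -
  have "poly_set N v z = (\<Inter>j\<in>{..<N}. {x. v j \<bullet> x \<le> z j})"
    by (auto simp: poly_set_def inner_commute)
  then show ?thesis by (auto intro!: closed_INT closed_halfspace_le)
qed

lemma mem_poly_set_limit:
  assumes lim: "\<forall>j<N. (\<lambda>l. zs l j) \<longlonglongrightarrow> z j" and "X \<longlonglongrightarrow> x"
    and X: "eventually (\<lambda>l. X l \<in> poly_set N v (zs l)) sequentially"
  shows "x \<in> poly_set N v z"
  unfolding poly_set_def
proof (intro CollectI allI impI)
  fix j assume "j < N"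
  show "x \<bullet> v j \<le> z j"
  proof (rule tendsto_le)
    show "(\<lambda>l. zs l j) \<longlonglongrightarrow> z j" using lim \<open>j < N\<close> by blast
    show "(\<lambda>l. X l \<bullet> v j) \<longlonglongrightarrow> x \<bullet> v j" using \<open>X \<longlonglongrightarrow> x\<close> by (intro tendsto_intros)
    show "eventually (\<lambda>l. X l \<bullet> v j \<le> zs l j) sequentially"
      using X by eventually_elim (use \<open>j < N\<close> in \<open>auto simp: poly_set_def\<close>)
  qed simp
qed

lemma approx_in_poly_sets:
  assumes lim: "\<forall>j<N. (\<lambda>l. zs l j) \<longlonglongrightarrow> z j" and x0: "\<forall>j<N. x0 \<bullet> v j < z j"
    and \<xi>: "\<xi> \<in> poly_set N v z"
  shows "\<exists>y. y \<longlonglongrightarrow> \<xi> \<and> eventually (\<lambda>l. y l \<in> poly_set N v (zs l)) sequentially"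
proof -
  \<comment> \<open>moving \<open>\<xi>\<close> the fraction \<open>\<theta> l\<close> towards \<open>x0\<close> gains slack \<open>\<theta> l * (z j - x0 \<bullet> v j) \<ge> \<bar>zs l j - z j\<bar>\<close>\<close>
  define \<theta> where "\<theta> l = (\<Sum>j<N. \<bar>zs l j - z j\<bar> / (z j - x0 \<bullet> v j))" for l
  define y where "y l = \<xi> + \<theta> l *\<^sub>R (x0 - \<xi>)" for l
  have "\<theta> \<longlonglongrightarrow> (\<Sum>j<N. \<bar>z j - z j\<bar> / (z j - x0 \<bullet> v j))"
    unfolding \<theta>_def using lim x0
    by (intro tendsto_sum tendsto_divide tendsto_rabs tendsto_diff tendsto_const) auto
  then have \<theta>0: "\<theta> \<longlonglongrightarrow> 0" by simp
  then have "y \<longlonglongrightarrow> \<xi> + 0 *\<^sub>R (x0 - \<xi>)"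
    unfolding y_def by (intro tendsto_intros)
  moreover have "eventually (\<lambda>l. y l \<in> poly_set N v (zs l)) sequentially"
    using order_tendstoD(2)[OF \<theta>0 zero_less_one]
  proof (rule eventually_mono)
    fix l assume "\<theta> l < 1"
    have "y l \<bullet> v j \<le> zs l j" if j: "j < N" for j
    proof -
      have "\<bar>zs l j - z j\<bar> / (z j - x0 \<bullet> v j) \<le> \<theta> l"
        unfolding \<theta>_def using x0 j by (intro member_le_sum) auto
      then have "\<bar>zs l j - z j\<bar> \<le> \<theta> l * (z j - x0 \<bullet> v j)"
        using x0 j by (simp add: divide_le_eq)
      moreover have "0 \<le> (1 - \<theta> l) * (z j - \<xi> \<bullet> v j)"
        using \<open>\<theta> l < 1\<close> \<xi> j by (intro mult_nonneg_nonneg) (auto simp: poly_set_def)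
      moreover have "zs l j - y l \<bullet> v j
          = (1 - \<theta> l) * (z j - \<xi> \<bullet> v j) + \<theta> l * (z j - x0 \<bullet> v j) + (zs l j - z j)"
        by (simp add: y_def inner_add_left inner_diff_left algebra_simps)
      ultimately show ?thesis by linarith
    qed
    then show "y l \<in> poly_set N v (zs l)" by (auto simp: poly_set_def)
  qed
  ultimately show ?thesis by auto
qed

lemma LIMSEQ_if_Bseq_subseq_limits_eq:
  fixes X :: "nat \<Rightarrow> 'a::{real_normed_vector, heine_borel}"
  assumes "Bseq X" and limits: "\<And>r y. strict_mono r \<Longrightarrow> (X \<circ> r) \<longlonglongrightarrow> y \<Longrightarrow> y = x"
  shows "X \<longlonglongrightarrow> x"
proof (rule ccontr)
  assume "\<not> X \<longlonglongrightarrow> x"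
  then obtain e where "e > 0" and "frequently (\<lambda>l. e \<le> dist (X l) x) sequentially"
    by (auto simp: tendsto_iff not_eventually not_less)
  then have "infinite {l. e \<le> dist (X l) x}"
    by (simp add: cofinite_eq_sequentially[symmetric] frequently_cofinite)
  from infinite_enumerate[OF this] obtain r :: "nat \<Rightarrow> nat"
    where r: "strict_mono r" "\<And>k. e \<le> dist (X (r k)) x"
    by auto
  have "bounded (range (X \<circ> r))"
    using \<open>Bseq X\<close> by (auto simp: Bseq_eq_bounded intro: bounded_subset)
  then obtain y s where s: "strict_mono s" "(X \<circ> r \<circ> s) \<longlonglongrightarrow> y"
    using bounded_imp_convergent_subsequence by blast
  then have "y = x"
    using r(1) by (intro limits[of "r \<circ> s"]) (auto simp: o_assoc strict_mono_o)
  moreover have "e \<le> dist y x"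
    using s(2) r(2) by (intro tendsto_le[OF _ tendsto_dist[OF s(2) tendsto_const]]) auto
  ultimately show False using \<open>e > 0\<close> by simp
qed

lemma inner_midpoint: "midpoint x y \<bullet> u = (x \<bullet> u + y \<bullet> u) / 2"
  by (simp add: midpoint_def inner_add_left field_simps)

lemma midpoint_mem_poly_set:
  assumes "x \<in> poly_set N v z" "y \<in> poly_set N v z"
  shows "midpoint x y \<in> poly_set N v z"
  unfolding poly_set_def mem_Collect_eq
proof (intro allI impI)
  fix j assume "j < N"
  then have "x \<bullet> v j \<le> z j" "y \<bullet> v j \<le> z j" using assms by (auto simp: poly_set_def)
  then show "midpoint x y \<bullet> v j \<le> z j" by (simp add: inner_midpoint field_simps)
qed

locale positively_spanning =
  fixes v :: "nat \<Rightarrow> 'a::euclidean_space" and N :: nat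
  assumes unit: "\<forall>j<N. norm (v j) = 1"
    and not_hemi: "\<not> (\<exists>u. norm u = 1 \<and> (\<forall>j<N. v j \<bullet> u \<ge> 0))"
begin

lemma exists_inner_pos:
  assumes "u \<noteq> 0" shows "\<exists>j<N. 0 < v j \<bullet> u"
proof (rule ccontr)
  assume "\<not> ?thesis"
  then have "v j \<bullet> u \<le> 0" if "j < N" for j
    using that by (meson not_less)
  then have "\<forall>j<N. 0 \<le> v j \<bullet> (- u /\<^sub>R norm u)"
    by (auto intro!: mult_nonneg_nonpos)
  moreover have "norm (- u /\<^sub>R norm u) = 1" using assms by simp
  ultimately show False using not_hemi by blast
qed

lemma norm_le_sum_inner_pos: "\<exists>c>0. \<forall>x. c * norm x \<le> (\<Sum>j<N. max 0 (v j \<bullet> x))"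
proof -
  define f where "f x = (\<Sum>j<N. max 0 (v j \<bullet> x))" for x
  have "continuous_on (sphere 0 1) f" unfolding f_def by (intro continuous_intros)
  then obtain u where u: "u \<in> sphere 0 1" and min: "\<And>w. w \<in> sphere 0 1 \<Longrightarrow> f u \<le> f w"
    using continuous_attains_inf[OF compact_sphere] by (metis sphere_eq_empty not_one_less_zero)
  have "u \<noteq> 0" using u by auto
  then obtain j where j: "j < N" "0 < v j \<bullet> u" using exists_inner_pos by blast
  have "0 < max 0 (v j \<bullet> u)" using j by simp
  also have "\<dots> \<le> f u" unfolding f_def using j by (intro member_le_sum) auto
  finally have "0 < f u" .
  have "f u * norm x \<le> f x" for x
  proof (cases "x = 0")
    case False
    then have "norm x * f u \<le> norm x * f (x /\<^sub>R norm x)" using min by simp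
    also have "\<dots> = f x"
      using False by (simp add: f_def sum_distrib_left max_mult_distrib_left mult.assoc[symmetric])
    finally show ?thesis by (simp add: mult.commute)
  qed (simp add: f_def)
  then show ?thesis using \<open>0 < f u\<close> unfolding f_def by blast
qed

lemma poly_set_norm_bound:
  "\<exists>c>0. \<forall>z x. x \<in> poly_set N v z \<longrightarrow> c * norm x \<le> (\<Sum>j<N. \<bar>z j\<bar>)"
proof -
  obtain c where "c > 0" and c: "\<And>x. c * norm x \<le> (\<Sum>j<N. max 0 (v j \<bullet> x))"
    using norm_le_sum_inner_pos by blast
  have "c * norm x \<le> (\<Sum>j<N. \<bar>z j\<bar>)" if "x \<in> poly_set N v z" for z x
  proof -
    have "(\<Sum>j<N. max 0 (v j \<bullet> x)) \<le> (\<Sum>j<N. \<bar>z j\<bar>)"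
      using that by (intro sum_mono) (auto simp: poly_set_def inner_commute)
    then show ?thesis using c order_trans by blast
  qed
  then show ?thesis using \<open>c > 0\<close> by blast
qed

lemma compact_poly_set: "compact (poly_set N v z)"
proof -
  obtain c where "c > 0" and c: "\<And>x. x \<in> poly_set N v z \<Longrightarrow> c * norm x \<le> (\<Sum>j<N. \<bar>z j\<bar>)"
    using poly_set_norm_bound by blast
  then have "poly_set N v z \<subseteq> cball 0 ((\<Sum>j<N. \<bar>z j\<bar>) / c)"
    by (auto simp: field_simps mult.commute)
  then show ?thesis
    using closed_poly_set by (metis bounded_cball bounded_subset compact_eq_bounded_closed)
qed

lemma Bseq_in_poly_sets:
  assumes lim: "\<forall>j<N. (\<lambda>l. zs l j) \<longlonglongrightarrow> z j"
    and X: "eventually (\<lambda>l. X l \<in> poly_set N v (zs l)) sequentially"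
  shows "Bseq X"
proof -
  obtain c where "c > 0" and c: "\<And>z x. x \<in> poly_set N v z \<Longrightarrow> c * norm x \<le> (\<Sum>j<N. \<bar>z j\<bar>)"
    using poly_set_norm_bound by blast
  have "(\<lambda>l. (\<Sum>j<N. \<bar>zs l j\<bar>) / c) \<longlonglongrightarrow> (\<Sum>j<N. \<bar>z j\<bar>) / c"
    using lim \<open>c > 0\<close> by (auto intro!: tendsto_intros)
  then have "Bseq (\<lambda>l. (\<Sum>j<N. \<bar>zs l j\<bar>) / c)"
    using convergent_imp_Bseq convergentI by blast
  moreover have "eventually (\<lambda>l. norm (X l) \<le> norm ((\<Sum>j<N. \<bar>zs l j\<bar>) / c)) sequentially"
    using X by eventually_elim (use c \<open>c > 0\<close> in \<open>auto simp: field_simps mult.commute\<close>)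
  ultimately show ?thesis by (rule Bseq_eventually_mono[rotated])
qed

lemma interior_poly_set_nonempty_iff:
  "interior (poly_set N v z) \<noteq> {} \<longleftrightarrow> (\<exists>x. \<forall>j<N. x \<bullet> v j < z j)"
proof
  assume "interior (poly_set N v z) \<noteq> {}"
  then obtain x e where "e > 0" and e: "ball x e \<subseteq> poly_set N v z"
    using mem_interior by blast
  have "x \<bullet> v j < z j" if j: "j < N" for j
  proof -
    have "x + (e/2) *\<^sub>R v j \<in> ball x e" using \<open>e > 0\<close> unit j by (auto simp: dist_norm)
    then have "(x + (e/2) *\<^sub>R v j) \<bullet> v j \<le> z j" using e j by (auto simp: poly_set_def)
    moreover have "v j \<bullet> v j = 1" using unit j by (simp add: dot_square_norm)
    ultimately show ?thesis using \<open>e > 0\<close> by (simp add: inner_add_left)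
  qed
  then show "\<exists>x. \<forall>j<N. x \<bullet> v j < z j" by blast
next
  assume "\<exists>x. \<forall>j<N. x \<bullet> v j < z j"
  then obtain x where x: "x \<in> (\<Inter>j\<in>{..<N}. {x. v j \<bullet> x < z j})"
    by (auto simp: inner_commute)
  moreover have "open (\<Inter>j\<in>{..<N}. {x. v j \<bullet> x < z j})"
    by (auto intro!: open_INT open_halfspace_lt)
  moreover have "(\<Inter>j\<in>{..<N}. {x. v j \<bullet> x < z j}) \<subseteq> poly_set N v z"
    by (auto simp: poly_set_def inner_commute less_imp_le)
  ultimately show "interior (poly_set N v z) \<noteq> {}"
    using interior_maximal interior_open by blast
qed

lemma eventually_interior_poly_set_nonempty:
  assumes lim: "\<forall>j<N. (\<lambda>l. zs l j) \<longlonglongrightarrow> z j" and "interior (poly_set N v z) \<noteq> {}"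
  shows "eventually (\<lambda>l. interior (poly_set N v (zs l)) \<noteq> {}) sequentially"
proof -
  obtain x where x: "\<forall>j<N. x \<bullet> v j < z j"
    using assms(2) interior_poly_set_nonempty_iff by blast
  have "eventually (\<lambda>l. \<forall>j\<in>{..<N}. x \<bullet> v j < zs l j) sequentially"
    using lim x by (intro eventually_ball_finite) (auto intro: order_tendstoD(1))
  then show ?thesis
    by eventually_elim (use interior_poly_set_nonempty_iff in blast)
qed

end

locale Phi_setting = positively_spanning v N
  for v :: "nat \<Rightarrow> 'a::euclidean_space" and N :: nat +
  fixes \<alpha> :: "nat \<Rightarrow> real" and p :: real
  assumes pos: "\<forall>j<N. \<alpha> j > 0"
    and p_nonneg: "0 \<le> p" and p_less_1: "p < 1"
begin

abbreviation K :: "(nat \<Rightarrow> real) \<Rightarrow> 'a set" where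
  "K z \<equiv> poly_set N v z"

abbreviation \<Phi> :: "(nat \<Rightarrow> real) \<Rightarrow> 'a \<Rightarrow> ereal" where
  "\<Phi> z \<xi> \<equiv> Phi p N v \<alpha> z \<xi>"

lemma tendsto_Phi:
  assumes lim: "\<forall>j<N. (\<lambda>l. zs l j) \<longlonglongrightarrow> z j" and "X \<longlonglongrightarrow> x"
    and X: "eventually (\<lambda>l. X l \<in> K (zs l)) sequentially"
  shows "(\<lambda>l. \<Phi> (zs l) (X l)) \<longlonglongrightarrow> \<Phi> z x"
  unfolding Phi_eq_Phi_slack
proof (rule tendsto_Phi_slack[OF pos p_nonneg])
  show "\<forall>j<N. (\<lambda>l. zs l j - X l \<bullet> v j) \<longlonglongrightarrow> z j - x \<bullet> v j"
    using lim \<open>X \<longlonglongrightarrow> x\<close> by (auto intro!: tendsto_intros)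
  show "eventually (\<lambda>l. \<forall>j<N. 0 \<le> zs l j - X l \<bullet> v j) sequentially"
    using X by eventually_elim (auto simp: poly_set_def)
qed

lemma Phi_has_maximiser:
  assumes "K z \<noteq> {}" shows "\<exists>\<xi>\<in>K z. \<forall>\<eta>\<in>K z. \<Phi> z \<eta> \<le> \<Phi> z \<xi>"
proof (rule continuous_attains_sup[OF compact_poly_set assms])
  show "continuous_on (K z) (\<Phi> z)"
    by (rule continuous_on_sequentiallyI, rule tendsto_Phi) auto
qed

lemma Phi_midpoint_greater:
  assumes x: "x \<in> K z" "\<Phi> z x \<noteq> -\<infinity>" and y: "y \<in> K z" "\<Phi> z y \<noteq> -\<infinity>" and "x \<noteq> y"
  shows "min (\<Phi> z x) (\<Phi> z y) < \<Phi> z (midpoint x y)"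
proof -
  have "x - y \<noteq> 0" using \<open>x \<noteq> y\<close> by simp
  then obtain j0 where j0: "j0 < N" "0 < v j0 \<bullet> (x - y)"
    using exists_inner_pos by blast
  define sx where "sx = (\<lambda>j. z j - x \<bullet> v j)"
  define sy where "sy = (\<lambda>j. z j - y \<bullet> v j)"
  have mid: "(\<lambda>j. z j - midpoint x y \<bullet> v j) = (\<lambda>j. (sx j + sy j) / 2)"
    unfolding sx_def sy_def inner_midpoint by (simp add: field_simps)
  have "min (Phi_slack p N \<alpha> sx) (Phi_slack p N \<alpha> sy) < Phi_slack p N \<alpha> (\<lambda>j. (sx j + sy j) / 2)"
  proof (rule Phi_slack_midpoint_greater[OF pos p_nonneg p_less_1 _ j0(1)])
    show "\<forall>j<N. 0 \<le> sx j \<and> 0 \<le> sy j"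
      using x(1) y(1) by (simp add: poly_set_def sx_def sy_def)
    show "sx j0 \<noteq> sy j0"
      using j0(2) by (simp add: sx_def sy_def inner_diff_right inner_commute)
    show "Phi_slack p N \<alpha> sx \<noteq> -\<infinity>" "Phi_slack p N \<alpha> sy \<noteq> -\<infinity>"
      using x(2) y(2) by (simp_all add: sx_def sy_def Phi_eq_Phi_slack)
  qed
  then show ?thesis
    unfolding Phi_eq_Phi_slack mid sx_def sy_def .
qed

lemma Phi_maximiser_unique:
  assumes int: "interior (K z) \<noteq> {}"
    and x: "x \<in> K z" "\<forall>\<eta>\<in>K z. \<Phi> z \<eta> \<le> \<Phi> z x"
    and y: "y \<in> K z" "\<forall>\<eta>\<in>K z. \<Phi> z \<eta> \<le> \<Phi> z y"
  shows "x = y"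
proof (rule ccontr)
  assume "x \<noteq> y"
  obtain x0 where "\<forall>j<N. x0 \<bullet> v j < z j"
    using int interior_poly_set_nonempty_iff by blast
  then have "x0 \<in> K z" "\<Phi> z x0 \<noteq> -\<infinity>"
    by (auto simp: poly_set_def Phi_eq_Phi_slack Phi_slack_def less_imp_le)
  then have "\<Phi> z x \<noteq> -\<infinity>" "\<Phi> z y \<noteq> -\<infinity>"
    using x(2) y(2) by (metis ereal_infty_less_eq(2))+
  then have "min (\<Phi> z x) (\<Phi> z y) < \<Phi> z (midpoint x y)"
    using Phi_midpoint_greater x(1) y(1) \<open>x \<noteq> y\<close> by blast
  moreover have "\<Phi> z (midpoint x y) \<le> min (\<Phi> z x) (\<Phi> z y)"
    using x(2) y(2) midpoint_mem_poly_set[OF x(1) y(1)] by simp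
  ultimately show False by (meson leD)
qed

lemma xi_maximiser:
  assumes "interior (K z) \<noteq> {}"
  shows "xi p N v \<alpha> z \<in> K z \<and> (\<forall>\<eta>\<in>K z. \<Phi> z \<eta> \<le> \<Phi> z (xi p N v \<alpha> z))"
  unfolding xi_def
proof (rule theI')
  have "K z \<noteq> {}" using assms interior_subset by blast
  then show "\<exists>!\<xi>. \<xi> \<in> K z \<and> (\<forall>\<eta>\<in>K z. \<Phi> z \<eta> \<le> \<Phi> z \<xi>)"
    using Phi_has_maximiser Phi_maximiser_unique[OF assms] by blast
qed

lemma xi_eqI:
  assumes "interior (K z) \<noteq> {}" and "\<xi> \<in> K z" "\<forall>\<eta>\<in>K z. \<Phi> z \<eta> \<le> \<Phi> z \<xi>"
  shows "xi p N v \<alpha> z = \<xi>"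
  using Phi_maximiser_unique[OF assms(1)] xi_maximiser[OF assms(1)] assms(2,3) by blast

lemma limit_of_maximisers_is_maximiser:
  assumes lim: "\<forall>j<N. (\<lambda>l. zs l j) \<longlonglongrightarrow> z j" and int: "interior (K z) \<noteq> {}"
    and "X \<longlonglongrightarrow> x"
    and max: "eventually (\<lambda>l. X l \<in> K (zs l) \<and> (\<forall>\<eta>\<in>K (zs l). \<Phi> (zs l) \<eta> \<le> \<Phi> (zs l) (X l)))
      sequentially"
  shows "x \<in> K z \<and> (\<forall>\<eta>\<in>K z. \<Phi> z \<eta> \<le> \<Phi> z x)"
proof (intro conjI ballI)
  have X: "eventually (\<lambda>l. X l \<in> K (zs l)) sequentially"
    using max by eventually_elim simp
  then show "x \<in> K z" using mem_poly_set_limit[OF lim \<open>X \<longlonglongrightarrow> x\<close>] by blast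
  fix \<eta> assume "\<eta> \<in> K z"
  obtain x0 where "\<forall>j<N. x0 \<bullet> v j < z j"
    using int interior_poly_set_nonempty_iff by blast
  then obtain y where "y \<longlonglongrightarrow> \<eta>" and y: "eventually (\<lambda>l. y l \<in> K (zs l)) sequentially"
    using approx_in_poly_sets[OF lim _ \<open>\<eta> \<in> K z\<close>] by blast
  show "\<Phi> z \<eta> \<le> \<Phi> z x"
  proof (rule tendsto_le[OF _ tendsto_Phi[OF lim \<open>X \<longlonglongrightarrow> x\<close> X] tendsto_Phi[OF lim \<open>y \<longlonglongrightarrow> \<eta>\<close> y]])
    show "eventually (\<lambda>l. \<Phi> (zs l) (y l) \<le> \<Phi> (zs l) (X l)) sequentially"
      using max y by eventually_elim blast
  qed simp
qed

end

theorem lemma4p2: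
  fixes v :: "nat \<Rightarrow> 'a::euclidean_space" and N :: nat and \<alpha> :: "nat \<Rightarrow> real"
    and p :: real and zs :: "nat \<Rightarrow> nat \<Rightarrow> real" and z :: "nat \<Rightarrow> real"
  assumes unit: "\<forall>j<N. norm (v j) = 1"
    and not_hemi: "\<not> (\<exists>u. norm u = 1 \<and> (\<forall>j<N. v j \<bullet> u \<ge> 0))"
    and pos: "\<forall>j<N. \<alpha> j > 0"
    and p: "0 \<le> p" "p < 1"
    and lim: "\<forall>j<N. (\<lambda>l. zs l j) \<longlonglongrightarrow> z j"
    and int: "interior (poly_set N v z) \<noteq> {}"
  shows "eventually (\<lambda>l. interior (poly_set N v (zs l)) \<noteq> {}) sequentially
    \<and> (\<lambda>l. xi p N v \<alpha> (zs l)) \<longlonglongrightarrow> xi p N v \<alpha> z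
    \<and> (\<lambda>l. Phi p N v \<alpha> (zs l) (xi p N v \<alpha> (zs l))) \<longlonglongrightarrow> Phi p N v \<alpha> z (xi p N v \<alpha> z)"
proof -
  interpret Phi_setting v N \<alpha> p
    by unfold_locales (fact unit not_hemi pos p)+
  define X where "X = (\<lambda>l. xi p N v \<alpha> (zs l))"
  have ev_int: "eventually (\<lambda>l. interior (K (zs l)) \<noteq> {}) sequentially"
    using eventually_interior_poly_set_nonempty[OF lim int] .
  then have max: "eventually (\<lambda>l. X l \<in> K (zs l) \<and> (\<forall>\<eta>\<in>K (zs l). \<Phi> (zs l) \<eta> \<le> \<Phi> (zs l) (X l)))
      sequentially"
    by eventually_elim (simp add: X_def xi_maximiser)
  then have X_in: "eventually (\<lambda>l. X l \<in> K (zs l)) sequentially"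
    by eventually_elim simp
  have "X \<longlonglongrightarrow> xi p N v \<alpha> z"
  proof (rule LIMSEQ_if_Bseq_subseq_limits_eq)
    show "Bseq X" using X_in by (rule Bseq_in_poly_sets[OF lim])
    fix r \<eta> assume r: "strict_mono r" and "(X \<circ> r) \<longlonglongrightarrow> \<eta>"
    then have X_r: "(\<lambda>k. X (r k)) \<longlonglongrightarrow> \<eta>" by (simp add: o_def)
    have lim_r: "\<forall>j<N. (\<lambda>k. zs (r k) j) \<longlonglongrightarrow> z j"
      using lim LIMSEQ_subseq_LIMSEQ[OF _ r] by (auto simp: o_def)
    have "eventually (\<lambda>k. X (r k) \<in> K (zs (r k))
        \<and> (\<forall>\<zeta>\<in>K (zs (r k)). \<Phi> (zs (r k)) \<zeta> \<le> \<Phi> (zs (r k)) (X (r k)))) sequentially"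
      using r max by (rule eventually_subseq)
    from limit_of_maximisers_is_maximiser[OF lim_r int X_r this]
    show "\<eta> = xi p N v \<alpha> z" by (metis xi_eqI[OF int])
  qed
  moreover have "(\<lambda>l. \<Phi> (zs l) (X l)) \<longlonglongrightarrow> \<Phi> z (xi p N v \<alpha> z)"
    using X_in by (rule tendsto_Phi[OF lim \<open>X \<longlonglongrightarrow> _\<close>])
  ultimately show ?thesis using ev_int by (simp add: X_def)
qed

end
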